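(* In the setting described in the context, for any $\boldsymbol{c}=(c_1,c_2)\in\mathbb{Z}_+^2$ with $\boldsymbol{c}\neq\mathbf{0}$, for every $(\boldsymbol{x},j)\in\mathbb{S}_+$, $j'\in S_0$ and $l_1,l_2\in\mathbb{Z}_+$, $$\limsup_{k\to\infty}\frac1k\log\tilde q_{(\boldsymbol{x},j),(kc_1+l_1,kc_2+l_2,j')}\le-\sup_{\boldsymbol{\theta}\in\mathcal{D}_{\boldsymbol{x}}}\langle\boldsymbol{\theta},\boldsymbol{c}\rangle .$$
   Context: Let $S_0=\{1,\dots,s_0\}$ be a finite set. The process $\{\boldsymbol{Y}_n\}=\{(X_{1,n},X_{2,n},J_n)\}$ is a discrete-time Markov chain on $\mathbb{S}=\mathbb{Z}^2\times S_0$ with space-homogeneous skip-free transitions: there are nonnegative $s_0\times s_0$ matrices $A_{k,l}$, $k,l\in\{-1,0,1\}$, with $\sum_{k,l}A_{k,l}$ stochastic, such that $\mathbb{P}(\boldsymbol{Y}_{n+1}=(x_1+k,x_2+l,j')\mid\boldsymbol{Y}_n=(x_1,x_2,j))=[A_{k,l}]_{j,j'}$ (all other transitions have probability $0$). Let $\mathbb{Z}_+$ be the nonnegative integers, $\mathbb{S}_+=\mathbb{Z}_+^2\times S_0$, $\tau=\inf\{n\ge0:\boldsymbol{Y}_n\notin\mathbb{S}_+\}$, and $\tilde q_{\boldsymbol{y},\boldsymbol{y}'}=\mathbb{E}\big(\sum_{n=0}^{\tau-1}1(\boldsymbol{Y}_n=\boldsymbol{y}')\mid\boldsymbol{Y}_0=\boldsymbol{y}\big)$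 for $\boldsymbol{y},\boldsymbol{y}'\in\mathbb{S}_+$. Let $A_{*,*}=\sum_{k,l}A_{k,l}$ with stationary distribution $\boldsymbol\pi_{*,*}$, $A_{i,*}=\sum_kA_{i,k}$, $A_{*,j}=\sum_kA_{k,j}$, $a_1=\boldsymbol{\pi}_{*,*}(A_{1,*}-A_{-1,*})\mathbf{1}$, $a_2=\boldsymbol{\pi}_{*,*}(A_{*,1}-A_{*,-1})\mathbf{1}$. Standing assumptions: $\{\boldsymbol{Y}_n\}$ is irreducible and aperiodic, and $a_1<0$ or $a_2<0$. For $\boldsymbol{x},\boldsymbol{x}'\in\mathbb{Z}_+^2$ let $N_{\boldsymbol{x},\boldsymbol{x}'}=(\tilde q_{(\boldsymbol{x},j),(\boldsymbol{x}',j')};j,j'\in S_0)$ and $\Phi_{\boldsymbol{x}}(\theta_1,\theta_2)=\sum_{k_1,k_2\ge0}e^{k_1\theta_1+k_2\theta_2}N_{\boldsymbol{x},(k_1,k_2)}$; $\mathcal{D}_{\boldsymbol{x}}$ is the interior of $\{(\theta_1,\theta_2)\in\mathbb{R}^2:\Phi_{\boldsymbol{x}}(\theta_1,\theta_2)<\infty \text{ elementwise}\}$. $\langle\cdot,\cdot\rangle$ is the Euclidean inner product. *)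

theory Defs
  imports "HOL-Analysis.Analysis"
begin

text \<open>States of S = Z^2 x S_0 are triples (x1, x2, j) with S_0 = {0..<s0}
  (phase j corresponds to j+1 in the paper). The transition matrices are given by
  A k l j j' = [A_{k,l}]_{j,j'} for k, l in {-1,0,1}.\<close>

type_synonym state = "int \<times> int \<times> nat"

definition in_S :: "nat \<Rightarrow> state \<Rightarrow> bool" where
  "in_S s0 y = (case y of (x1, x2, j) \<Rightarrow> j < s0)"

definition in_Sp :: "nat \<Rightarrow> state \<Rightarrow> bool" where
  "in_Sp s0 y = (case y of (x1, x2, j) \<Rightarrow> 0 \<le> x1 \<and> 0 \<le> x2 \<and> j < s0)"

definition trans_prob :: "(int \<Rightarrow> int \<Rightarrow> nat \<Rightarrow> nat \<Rightarrow> real) \<Rightarrow> nat \<Rightarrow> state \<Rightarrow> state \<Rightarrow> real" where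
  "trans_prob A s0 y y' = (case y of (x1, x2, j) \<Rightarrow> case y' of (x1', x2', j') \<Rightarrow>
     if j < s0 \<and> j' < s0 \<and> \<bar>x1' - x1\<bar> \<le> 1 \<and> \<bar>x2' - x2\<bar> \<le> 1
     then A (x1' - x1) (x2' - x2) j j' else 0)"

text \<open>n-step transition probabilities P(Y_n = y' | Y_0 = y) (only predecessors that are
  neighbours of y' can contribute, so the sum is finite).\<close>
fun nstep_prob :: "(int \<Rightarrow> int \<Rightarrow> nat \<Rightarrow> nat \<Rightarrow> real) \<Rightarrow> nat \<Rightarrow> nat \<Rightarrow> state \<Rightarrow> state \<Rightarrow> real" where
  "nstep_prob A s0 0 y y' = (if y = y' \<and> in_S s0 y then 1 else 0)"
| "nstep_prob A s0 (Suc n) y (x1', x2', j') =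
     (\<Sum>a\<in>{-1,0,1::int}. \<Sum>b\<in>{-1,0,1::int}. \<Sum>i<s0.
        nstep_prob A s0 n y (x1' - a, x2' - b, i) * trans_prob A s0 (x1' - a, x2' - b, i) (x1', x2', j'))"

text \<open>Killed n-step probabilities P(Y_n = y', n < tau | Y_0 = y), where
  tau is the first exit time from S_+.\<close>
fun killed_prob :: "(int \<Rightarrow> int \<Rightarrow> nat \<Rightarrow> nat \<Rightarrow> real) \<Rightarrow> nat \<Rightarrow> nat \<Rightarrow> state \<Rightarrow> state \<Rightarrow> real" where
  "killed_prob A s0 0 y y' = (if y = y' \<and> in_Sp s0 y then 1 else 0)"
| "killed_prob A s0 (Suc n) y (x1', x2', j') =
     (if in_Sp s0 (x1', x2', j') then
       (\<Sum>a\<in>{-1,0,1::int}. \<Sum>b\<in>{-1,0,1::int}. \<Sum>i<s0.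
        killed_prob A s0 n y (x1' - a, x2' - b, i) * trans_prob A s0 (x1' - a, x2' - b, i) (x1', x2', j'))
      else 0)"

text \<open>q~_{y,y'} = E(sum_{n<tau} 1(Y_n = y') | Y_0 = y) = sum_n P(Y_n = y', n < tau | Y_0 = y),
  valued in [0, \<infinity>].\<close>
definition qt :: "(int \<Rightarrow> int \<Rightarrow> nat \<Rightarrow> nat \<Rightarrow> real) \<Rightarrow> nat \<Rightarrow> state \<Rightarrow> state \<Rightarrow> ennreal" where
  "qt A s0 y y' = (\<Sum>n. ennreal (killed_prob A s0 n y y'))"

definition elog :: "ennreal \<Rightarrow> ereal" where
  "elog q = (if q = 0 then -\<infinity> else if q = \<infinity> then \<infinity> else ereal (ln (enn2real q)))"

definition Phi :: "(int \<Rightarrow> int \<Rightarrow> nat \<Rightarrow> nat \<Rightarrow> real) \<Rightarrow> nat \<Rightarrow> int \<times> int \<Rightarrow> real \<times> real \<Rightarrow> nat \<Rightarrow> nat \<Rightarrow> ennreal" where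
  "Phi A s0 x \<theta> j j' = (\<Sum>k1. \<Sum>k2. ennreal (exp (real k1 * fst \<theta> + real k2 * snd \<theta>))
        * qt A s0 (fst x, snd x, j) (int k1, int k2, j'))"

definition Dom :: "(int \<Rightarrow> int \<Rightarrow> nat \<Rightarrow> nat \<Rightarrow> real) \<Rightarrow> nat \<Rightarrow> int \<times> int \<Rightarrow> (real \<times> real) set" where
  "Dom A s0 x = interior {\<theta>. \<forall>j<s0. \<forall>j'<s0. Phi A s0 x \<theta> j j' < \<infinity>}"

definition irreducible_chain :: "(int \<Rightarrow> int \<Rightarrow> nat \<Rightarrow> nat \<Rightarrow> real) \<Rightarrow> nat \<Rightarrow> bool" where
  "irreducible_chain A s0 = (\<forall>y y'. in_S s0 y \<longrightarrow> in_S s0 y' \<longrightarrow> (\<exists>n. nstep_prob A s0 n y y' > 0))"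

definition aperiodic_chain :: "(int \<Rightarrow> int \<Rightarrow> nat \<Rightarrow> nat \<Rightarrow> real) \<Rightarrow> nat \<Rightarrow> bool" where
  "aperiodic_chain A s0 = (\<forall>y. in_S s0 y \<longrightarrow> Gcd {n. 0 < n \<and> nstep_prob A s0 n y y > 0} = 1)"

end

theory Submission
  imports Defs
begin

text \<open>A Chernoff bound. For \<open>\<theta> \<in> D\<^sub>x\<close> every term of the series defining
  \<open>\<Phi>\<^sub>x(\<theta>)\<close> is bounded by its finite sum, so
  \<open>q~(x, y) \<le> \<Phi>\<^sub>x(\<theta>) exp (-\<langle>\<theta>, y\<rangle>)\<close>. At \<open>y = k c + l\<close> this gives
  \<open>log q~ \<le> const - k \<langle>\<theta>, c\<rangle>\<close>; dividing by \<open>k\<close> and letting \<open>k \<rightarrow> \<infinity>\<close>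
  bounds the limsup by \<open>-\<langle>\<theta>, c\<rangle>\<close>, and it remains to take the infimum over \<open>\<theta>\<close>.\<close>

lemma term_le_suminf:
  fixes f :: "nat \<Rightarrow> 'a::{canonically_ordered_monoid_add,linorder_topology,complete_linorder}"
  shows "f n \<le> suminf f"
  using sum_le_suminf[of f "{n}"] by simp

lemma qt_exp_le_Phi:
  "ennreal (exp (real k1 * fst \<theta> + real k2 * snd \<theta>)) * qt A s0 (x1, x2, j) (int k1, int k2, j')
     \<le> Phi A s0 (x1, x2) \<theta> j j'"
  unfolding Phi_def fst_conv snd_conv
  by (rule order_trans[OF term_le_suminf term_le_suminf])

lemma Phi_finite_if_mem_Dom:
  "\<theta> \<in> Dom A s0 x \<Longrightarrow> j < s0 \<Longrightarrow> j' < s0 \<Longrightarrow> Phi A s0 x \<theta> j j' < \<infinity>"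
  unfolding Dom_def using interior_subset by blast

lemma elog_le_if_exp_mult_le:
  assumes le: "ennreal (exp s) * q \<le> ennreal (exp b)"
  shows "elog q \<le> ereal (b - s)"
proof (cases "q = 0")
  case True
  then show ?thesis by (simp add: elog_def)
next
  case False
  have "q \<noteq> \<infinity>"
    using le by (auto simp: ennreal_mult_top top_unique)
  then obtain r where r: "q = ennreal r" "0 \<le> r"
    by (cases q) auto
  with False have "0 < r" by auto
  have "exp s * r \<le> exp b"
    using le r by (simp add: ennreal_mult'[symmetric])
  then have "ln (exp s * r) \<le> b"
    using ln_mono[of "exp s * r" "exp b"] \<open>0 < r\<close> by simp
  then show ?thesis
    using r \<open>0 < r\<close> by (simp add: elog_def ln_mult)
qed

lemma Limsup_le_if_eventually_le_const_div:
  assumes "\<forall>\<^sub>F k in sequentially. f k \<le> ereal (C / real k - t)"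
  shows "limsup f \<le> ereal (- t)"
proof -
  have "(\<lambda>k. ereal (C / real k - t)) \<longlonglongrightarrow> ereal (0 - t)"
    by (intro tendsto_intros lim_const_over_n)
  then have "limsup (\<lambda>k. ereal (C / real k - t)) = ereal (- t)"
    by (simp add: lim_imp_Limsup)
  with Limsup_mono[OF assms] show ?thesis by simp
qed

lemma limsup_elog_qt_le:
  assumes "\<theta> \<in> Dom A s0 (x1, x2)" and "j < s0" and "j' < s0"
  shows "limsup (\<lambda>k::nat. ereal (1 / real k) *
            elog (qt A s0 (x1, x2, j) (int (k * c1 + l1), int (k * c2 + l2), j')))
         \<le> ereal (- (fst \<theta> * real c1 + snd \<theta> * real c2))"
proof -
  define t where "t = fst \<theta> * real c1 + snd \<theta> * real c2"
  define u where "u = fst \<theta> * real l1 + snd \<theta> * real l2"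
  define b where "b = ln (enn2real (Phi A s0 (x1, x2) \<theta> j j') + 1)"
  have "Phi A s0 (x1, x2) \<theta> j j' < \<infinity>"
    using Phi_finite_if_mem_Dom assms by blast
  then have Phi_le: "Phi A s0 (x1, x2) \<theta> j j' \<le> ennreal (exp b)"
    unfolding b_def by (cases "Phi A s0 (x1, x2) \<theta> j j'") auto
  have "\<forall>\<^sub>F k in sequentially. ereal (1 / real k) *
          elog (qt A s0 (x1, x2, j) (int (k * c1 + l1), int (k * c2 + l2), j'))
        \<le> ereal ((b - u) / real k - t)"
    using eventually_gt_at_top[of "0::nat"]
  proof eventually_elim
    case (elim k)
    let ?s = "real (k * c1 + l1) * fst \<theta> + real (k * c2 + l2) * snd \<theta>"
    let ?q = "qt A s0 (x1, x2, j) (int (k * c1 + l1), int (k * c2 + l2), j')"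
    have "ennreal (exp ?s) * ?q \<le> ennreal (exp b)"
      by (rule order_trans[OF qt_exp_le_Phi Phi_le])
    then have "elog ?q \<le> ereal (b - ?s)"
      by (rule elog_le_if_exp_mult_le)
    then have "ereal (1 / real k) * elog ?q \<le> ereal (1 / real k) * ereal (b - ?s)"
      by (rule ereal_mult_left_mono) simp
    also have "\<dots> = ereal ((b - u) / real k - t)"
      using elim by (simp add: t_def u_def field_simps)
    finally show ?case .
  qed
  then show ?thesis
    unfolding t_def by (rule Limsup_le_if_eventually_le_const_div)
qed

theorem proposition2p4:
  fixes A :: "int \<Rightarrow> int \<Rightarrow> nat \<Rightarrow> nat \<Rightarrow> real" and s0 :: nat
    and \<pi> :: "nat \<Rightarrow> real"
    and c1 c2 :: nat and x1 x2 :: int and j j' l1 l2 :: nat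
  assumes s0_pos: "1 \<le> s0"
    and A_nonneg: "\<And>k l i i'. 0 \<le> A k l i i'"
    and A_stoch: "\<And>i. i < s0 \<Longrightarrow>
          (\<Sum>k\<in>{-1,0,1::int}. \<Sum>l\<in>{-1,0,1::int}. \<Sum>i'<s0. A k l i i') = 1"
    and irred: "irreducible_chain A s0"
    and aper: "aperiodic_chain A s0"
    and pi_nonneg: "\<And>i. i < s0 \<Longrightarrow> 0 \<le> \<pi> i"
    and pi_sum: "(\<Sum>i<s0. \<pi> i) = 1"
    and pi_stat: "\<And>i'. i' < s0 \<Longrightarrow>
          (\<Sum>i<s0. \<pi> i * (\<Sum>k\<in>{-1,0,1::int}. \<Sum>l\<in>{-1,0,1::int}. A k l i i')) = \<pi> i'"
    and drift: "(\<Sum>i<s0. \<pi> i * (\<Sum>i'<s0. \<Sum>l\<in>{-1,0,1::int}. A 1 l i i' - A (-1) l i i')) < 0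
              \<or> (\<Sum>i<s0. \<pi> i * (\<Sum>i'<s0. \<Sum>k\<in>{-1,0,1::int}. A k 1 i i' - A k (-1) i i')) < 0"
    and c_nz: "(c1, c2) \<noteq> (0, 0)"
    and x_nonneg: "0 \<le> x1" "0 \<le> x2"
    and j_lt: "j < s0" and j'_lt: "j' < s0"
  shows "limsup (\<lambda>k::nat. ereal (1 / real k) *
            elog (qt A s0 (x1, x2, j) (int (k * c1 + l1), int (k * c2 + l2), j')))
         \<le> - (SUP \<theta>\<in>Dom A s0 (x1, x2). ereal (fst \<theta> * real c1 + snd \<theta> * real c2))"
proof -
  \<comment> \<open>Only the finiteness of \<open>\<Phi>\<^sub>x\<close> on \<open>D\<^sub>x\<close> enters.\<close>
  let ?L = "limsup (\<lambda>k::nat. ereal (1 / real k) *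
            elog (qt A s0 (x1, x2, j) (int (k * c1 + l1), int (k * c2 + l2), j')))"
  have "ereal (fst \<theta> * real c1 + snd \<theta> * real c2) \<le> - ?L" if "\<theta> \<in> Dom A s0 (x1, x2)" for \<theta>
    using limsup_elog_qt_le[OF that j_lt j'_lt, of c1 l1 c2 l2]
      ereal_minus_le_minus[of "ereal (- (fst \<theta> * real c1 + snd \<theta> * real c2))" ?L]
    by (simp add: add.commute)
  then have "(SUP \<theta>\<in>Dom A s0 (x1, x2). ereal (fst \<theta> * real c1 + snd \<theta> * real c2)) \<le> - ?L"
    by (rule SUP_least)
  then show ?thesis
    using ereal_minus_le_minus[of "- ?L"] by simp
qed

end
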